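(* Let $a,b\in\mathbb{C}$ be such that the six numbers $(t_1,\dots,t_6)=(1,-1,a,-a,b,-b)$ are pairwise distinct, and let ${\mathcal A}^0=\{H_1^0,\dots,H_6^0\}$ be the central arrangement in $\mathbb{C}^3$ with $H_i^0=\{x\in\mathbb{C}^3:\alpha_i\cdot x=0\}$, $\alpha_i=(1,t_i,t_i^2)$. Then ${\mathcal A}^0$ is a central generic arrangement which is non-very generic.
   Context: A central arrangement ${\mathcal A}^0=\{H_1^0,\dots,H_n^0\}$ of linear hyperplanes in $\mathbb{C}^k$ ($k<n$) is called central generic if any $m\le k$ of its hyperplanes intersect in codimension $m$. For $t=(x_1,\dots,x_n)\in\mathbb{C}^n$ the translate ${\mathcal A}^t$ consists of $H_i^{x_i}=H_i^0+\alpha_i x_i$, $\alpha_i$ normal to $H_i^0$. For $L\subset[n]$, $|L|=k+1$, $D_L\subset\mathbb{C}^n$ is the hyperplane of translations $t$ with $\bigcap_{p\in L}H_p^{x_p}\ne\emptyset$; the discriminantal arrangement ${\mathcal B}(n,k,{\mathcal A}^0)$ is the arrangement of all $D_L$. There is a Zariski open dense set $\mathcal Z$ of central generic arrangements of $n$ hyperplanes in $\mathbb{C}^k$ on which the intersection lattice of ${\mathcal B}(n,k,{\mathcal A})$ is constant; arrangements in $\mathcal Z$ are very generic, the others non-very generic. *)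

theory Defs
  imports Complex_Main
begin

text \<open>An arrangement of n hyperplanes in C^k is given by its normal (coefficient) vectors
  alpha i = (alpha i 0, ..., alpha i (k-1)) for i < n; H_i^0 = {v. sum_j alpha i j * v j = 0}.\<close>

definition arr_space :: "nat \<Rightarrow> nat \<Rightarrow> (nat \<Rightarrow> nat \<Rightarrow> complex) set" where
  "arr_space n k = {\<alpha>. \<forall>p j. (n \<le> p \<or> k \<le> j) \<longrightarrow> \<alpha> p j = 0}"

definition lin_form :: "nat \<Rightarrow> (nat \<Rightarrow> complex) \<Rightarrow> (nat \<Rightarrow> complex) \<Rightarrow> complex" where
  "lin_form k a v = (\<Sum>j<k. a j * v j)"

text \<open>Central generic: any m \<le> k of the hyperplanes meet in codimension m, i.e. any
  m \<le> k of the normal vectors are linearly independent.\<close>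
definition central_generic :: "nat \<Rightarrow> nat \<Rightarrow> (nat \<Rightarrow> nat \<Rightarrow> complex) \<Rightarrow> bool" where
  "central_generic n k \<alpha> \<longleftrightarrow> k < n \<and> \<alpha> \<in> arr_space n k \<and>
     (\<forall>I. I \<subseteq> {..<n} \<and> card I \<le> k \<longrightarrow>
        (\<forall>c. (\<forall>j<k. (\<Sum>i\<in>I. c i * \<alpha> i j) = 0) \<longrightarrow> (\<forall>i\<in>I. c i = 0)))"

text \<open>Translated hyperplane H_p^{x}: all points w with alpha_p . w = x.  (Translating H_p^0 by
  x times a fixed vector transversal to H_p^0; any such choice only rescales the coordinate x_p
  of the translation space, which does not change the intersection lattice.)\<close>
definition transl_hyp :: "nat \<Rightarrow> (nat \<Rightarrow> nat \<Rightarrow> complex) \<Rightarrow> nat \<Rightarrow> complex \<Rightarrow> (nat \<Rightarrow> complex) set" where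
  "transl_hyp k \<alpha> p x = {w. lin_form k (\<alpha> p) w = x}"

definition Ls :: "nat \<Rightarrow> nat \<Rightarrow> nat set set" where
  "Ls n k = {L. L \<subseteq> {..<n} \<and> card L = k + 1}"

definition D_L :: "nat \<Rightarrow> (nat \<Rightarrow> nat \<Rightarrow> complex) \<Rightarrow> nat set \<Rightarrow> (nat \<Rightarrow> complex) set" where
  "D_L k \<alpha> L = {t. (\<Inter>p\<in>L. transl_hyp k \<alpha> p (t p)) \<noteq> {}}"

text \<open>The (labelled) intersection lattice of B(n,k,A): recorded by which hyperplanes D_L contain
  each intersection of a family of the D_M (this determines the lattice of flats with labels).\<close>
definition lattice_data :: "nat \<Rightarrow> nat \<Rightarrow> (nat \<Rightarrow> nat \<Rightarrow> complex) \<Rightarrow> nat set set \<Rightarrow> nat set \<Rightarrow> bool" where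
  "lattice_data n k \<alpha> = (\<lambda>S L. S \<subseteq> Ls n k \<and> L \<in> Ls n k \<and> (\<Inter>M\<in>S. D_L k \<alpha> M) \<subseteq> D_L k \<alpha> L)"

inductive polyfun :: "nat \<Rightarrow> nat \<Rightarrow> ((nat \<Rightarrow> nat \<Rightarrow> complex) \<Rightarrow> complex) \<Rightarrow> bool"
  for n k where
  const: "polyfun n k (\<lambda>_. c)"
| coord: "p < n \<Longrightarrow> j < k \<Longrightarrow> polyfun n k (\<lambda>\<alpha>. \<alpha> p j)"
| add: "polyfun n k f \<Longrightarrow> polyfun n k g \<Longrightarrow> polyfun n k (\<lambda>\<alpha>. f \<alpha> + g \<alpha>)"
| mult: "polyfun n k f \<Longrightarrow> polyfun n k g \<Longrightarrow> polyfun n k (\<lambda>\<alpha>. f \<alpha> * g \<alpha>)"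

definition zariski_closed :: "nat \<Rightarrow> nat \<Rightarrow> (nat \<Rightarrow> nat \<Rightarrow> complex) set \<Rightarrow> bool" where
  "zariski_closed n k C \<longleftrightarrow> (\<exists>F. (\<forall>f\<in>F. polyfun n k f) \<and>
      C = {\<alpha> \<in> arr_space n k. \<forall>f\<in>F. f \<alpha> = 0})"

definition zariski_open :: "nat \<Rightarrow> nat \<Rightarrow> (nat \<Rightarrow> nat \<Rightarrow> complex) set \<Rightarrow> bool" where
  "zariski_open n k U \<longleftrightarrow> U \<subseteq> arr_space n k \<and> zariski_closed n k (arr_space n k - U)"

definition zariski_dense :: "nat \<Rightarrow> nat \<Rightarrow> (nat \<Rightarrow> nat \<Rightarrow> complex) set \<Rightarrow> bool" where
  "zariski_dense n k Z \<longleftrightarrow> (\<forall>C. zariski_closed n k C \<and> Z \<subseteq> C \<longrightarrow> C = arr_space n k)"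

definition very_generic :: "nat \<Rightarrow> nat \<Rightarrow> (nat \<Rightarrow> nat \<Rightarrow> complex) \<Rightarrow> bool" where
  "very_generic n k \<alpha> \<longleftrightarrow> central_generic n k \<alpha> \<and>
     (\<exists>Z. zariski_open n k Z \<and> zariski_dense n k Z \<and> Z \<subseteq> {\<beta>. central_generic n k \<beta>} \<and>
          \<alpha> \<in> Z \<and> (\<forall>\<beta>\<in>Z. lattice_data n k \<beta> = lattice_data n k \<alpha>))"

end

theory Submission
  imports Defs "HOL-Computational_Algebra.Polynomial"
begin

text \<open>Central genericity holds for every Vandermonde arrangement with distinct nodes: a linear
  relation among at most k rows is killed by evaluating against the polynomial of degree < k
  vanishing at all nodes but one.

  For the nodes \<open>\<pm>1, \<pm>a, \<pm>b\<close> the three lines \<open>H\<^sub>i \<inter> H\<^sub>j\<close> of opposite nodes all lie in the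
  plane \<open>w\<^sub>1 = 0\<close>, and this forces \<open>D\<^sub>0\<^sub>1\<^sub>2\<^sub>3 \<inter> D\<^sub>0\<^sub>1\<^sub>4\<^sub>5 \<subseteq> D\<^sub>2\<^sub>3\<^sub>4\<^sub>5\<close>.  For an arbitrary
  arrangement this inclusion implies the vanishing of a polynomial in the normal vectors
  which is not identically zero, so no Zariski dense set of arrangements can share the
  intersection lattice.\<close>

definition vandermonde_arr :: "nat \<Rightarrow> nat \<Rightarrow> (nat \<Rightarrow> complex) \<Rightarrow> nat \<Rightarrow> nat \<Rightarrow> complex" where
  "vandermonde_arr n k s = (\<lambda>i j. if i < n \<and> j < k then s i ^ j else 0)"

lemma sum_mult_poly_eq_0_if_moments_eq_0:
  fixes c x :: "'i \<Rightarrow> 'a::comm_ring_1"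
  assumes moments: "\<And>j. j < k \<Longrightarrow> (\<Sum>i\<in>I. c i * x i ^ j) = 0"
    and deg: "degree p < k"
  shows "(\<Sum>i\<in>I. c i * poly p (x i)) = 0"
proof -
  have "(\<Sum>i\<in>I. c i * poly p (x i)) = (\<Sum>j\<le>degree p. coeff p j * (\<Sum>i\<in>I. c i * x i ^ j))"
    by (simp add: poly_altdef sum_distrib_left mult.left_commute sum.swap[of _ I])
  also have "\<dots> = 0"
    using deg by (intro sum.neutral) (simp add: moments)
  finally show ?thesis .
qed

lemma central_generic_vandermonde_arr:
  assumes "k < n" and inj: "inj_on s {..<n}"
  shows "central_generic n k (vandermonde_arr n k s)"
  unfolding central_generic_def
proof (intro conjI allI impI ballI)
  show "vandermonde_arr n k s \<in> arr_space n k"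
    by (auto simp: arr_space_def vandermonde_arr_def)
next
  fix I c i0
  assume I: "I \<subseteq> {..<n} \<and> card I \<le> k"
    and rel: "\<forall>j<k. (\<Sum>i\<in>I. c i * vandermonde_arr n k s i j) = 0" and i0: "i0 \<in> I"
  have fin: "finite I"
    using I finite_subset by blast
  define p where "p = (\<Prod>j\<in>I - {i0}. [:- s j, 1:])"
  have "degree p \<le> card (I - {i0})"
    unfolding p_def using degree_prod_sum_le[of "I - {i0}" "\<lambda>j. [:- s j, 1:]"] fin by simp
  also have "\<dots> = card I - 1"
    using fin i0 by (simp add: card_Diff_singleton)
  also have "\<dots> < k"
    using I fin i0 card_gt_0_iff[of I] by auto
  finally have "degree p < k" .
  moreover have "(\<Sum>i\<in>I. c i * s i ^ j) = 0" if "j < k" for j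
  proof -
    have "(\<Sum>i\<in>I. c i * s i ^ j) = (\<Sum>i\<in>I. c i * vandermonde_arr n k s i j)"
      using I that by (intro sum.cong) (auto simp: vandermonde_arr_def)
    then show ?thesis
      using rel that by simp
  qed
  ultimately have "(\<Sum>i\<in>I. c i * poly p (s i)) = 0"
    using sum_mult_poly_eq_0_if_moments_eq_0 by blast
  moreover have "poly p (s i) = 0" if "i \<in> I - {i0}" for i
    unfolding p_def poly_prod using fin that by (auto intro: prod_zero)
  ultimately have "c i0 * poly p (s i0) = 0"
    using fin i0 by (simp add: sum.remove)
  moreover have "poly p (s i0) \<noteq> 0"
    unfolding p_def poly_prod using fin I i0 inj by (auto simp: inj_on_def)
  ultimately show "c i0 = 0"
    by simp
qed (use assms in simp)

lemma lin_form_3: "lin_form 3 v w = v 0 * w 0 + v 1 * w 1 + v 2 * w 2"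
  by (simp add: lin_form_def eval_nat_numeral)

lemma mem_D_L_iff: "t \<in> D_L k \<beta> L \<longleftrightarrow> (\<exists>w. \<forall>p\<in>L. lin_form k (\<beta> p) w = t p)"
  unfolding D_L_def transl_hyp_def by blast

definition det3 :: "(nat \<Rightarrow> nat \<Rightarrow> complex) \<Rightarrow> nat \<Rightarrow> nat \<Rightarrow> nat \<Rightarrow> complex" where
  "det3 \<beta> p q r = \<beta> p 0 * (\<beta> q 1 * \<beta> r 2 - \<beta> q 2 * \<beta> r 1)
     - \<beta> p 1 * (\<beta> q 0 * \<beta> r 2 - \<beta> q 2 * \<beta> r 0)
     + \<beta> p 2 * (\<beta> q 0 * \<beta> r 1 - \<beta> q 1 * \<beta> r 0)"

text \<open>Up to a constant factor this is the determinant of the direction vectors of the three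
  lines \<open>H\<^sub>0 \<inter> H\<^sub>1\<close>, \<open>H\<^sub>2 \<inter> H\<^sub>3\<close>, \<open>H\<^sub>4 \<inter> H\<^sub>5\<close>.\<close>
definition coplanarity_poly :: "(nat \<Rightarrow> nat \<Rightarrow> complex) \<Rightarrow> complex" where
  "coplanarity_poly \<beta> = det3 \<beta> 3 4 5 * det3 \<beta> 0 1 2 - det3 \<beta> 2 4 5 * det3 \<beta> 0 1 3"

lemma det3_linear_relation:
  "det3 \<beta> q r s * lin_form 3 (\<beta> p) w - det3 \<beta> p r s * lin_form 3 (\<beta> q) w
   + det3 \<beta> p q s * lin_form 3 (\<beta> r) w - det3 \<beta> p q r * lin_form 3 (\<beta> s) w = 0"
  unfolding lin_form_3 det3_def by algebra

lemma coplanarity_poly_eq_0_if_lattice_inclusion: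
  assumes "lattice_data 6 3 \<beta> {{0,1,2,3},{0,1,4,5}} {2,3,4,5}"
  shows "coplanarity_poly \<beta> = 0"
proof -
  text \<open>\<open>u = \<beta>\<^sub>0 \<times> \<beta>\<^sub>1\<close> spans \<open>H\<^sub>0 \<inter> H\<^sub>1\<close>; the translation \<open>t\<close> fixes \<open>H\<^sub>0, H\<^sub>1, H\<^sub>4, H\<^sub>5\<close> and
    moves \<open>H\<^sub>2, H\<^sub>3\<close> so that they pass through \<open>u\<close>.\<close>
  define u :: "nat \<Rightarrow> complex" where "u = (\<lambda>j. if j = 0 then \<beta> 0 1 * \<beta> 1 2 - \<beta> 0 2 * \<beta> 1 1
     else if j = 1 then \<beta> 0 2 * \<beta> 1 0 - \<beta> 0 0 * \<beta> 1 2 else \<beta> 0 0 * \<beta> 1 1 - \<beta> 0 1 * \<beta> 1 0)"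
  define t :: "nat \<Rightarrow> complex" where "t = (\<lambda>p. if p = 2 \<or> p = 3 then lin_form 3 (\<beta> p) u else 0)"
  have "lin_form 3 (\<beta> 0) u = 0" "lin_form 3 (\<beta> 1) u = 0"
    unfolding lin_form_3 u_def by (simp_all add: algebra_simps)
  then have "t \<in> D_L 3 \<beta> {0,1,2,3}"
    unfolding mem_D_L_iff t_def by (intro exI[of _ u]) simp
  moreover have "t \<in> D_L 3 \<beta> {0,1,4,5}"
    unfolding mem_D_L_iff t_def by (intro exI[of _ "\<lambda>_. 0"]) (simp add: lin_form_def)
  ultimately have "t \<in> D_L 3 \<beta> {2,3,4,5}"
    using assms unfolding lattice_data_def by blast
  then obtain w where w: "\<forall>p\<in>{2,3,4,5}. lin_form 3 (\<beta> p) w = t p"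
    unfolding mem_D_L_iff by blast
  have "det3 \<beta> 3 4 5 * lin_form 3 (\<beta> 2) u - det3 \<beta> 2 4 5 * lin_form 3 (\<beta> 3) u = 0"
    using det3_linear_relation[where \<beta> = \<beta> and w = w and p = 2 and q = 3 and r = 4 and s = 5] w
    by (simp add: t_def)
  moreover have "lin_form 3 (\<beta> 2) u = det3 \<beta> 0 1 2" "lin_form 3 (\<beta> 3) u = det3 \<beta> 0 1 3"
    unfolding lin_form_3 u_def det3_def by (simp_all add: algebra_simps)
  ultimately show ?thesis
    unfolding coplanarity_poly_def by simp
qed

lemma polyfun_diff:
  assumes "polyfun n k f" "polyfun n k g"
  shows "polyfun n k (\<lambda>\<beta>. f \<beta> - g \<beta>)"
proof -
  have "polyfun n k (\<lambda>\<beta>. f \<beta> + (\<lambda>_. -1) \<beta> * g \<beta>)"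
    using assms by (intro polyfun.add polyfun.mult polyfun.const)
  then show ?thesis
    by simp
qed

lemma polyfun_det3: "p < n \<Longrightarrow> q < n \<Longrightarrow> r < n \<Longrightarrow> polyfun n 3 (\<lambda>\<beta>. det3 \<beta> p q r)"
  unfolding det3_def by (intro polyfun_diff polyfun.add polyfun.mult polyfun.coord) auto

lemma polyfun_coplanarity_poly: "polyfun 6 3 coplanarity_poly"
  unfolding coplanarity_poly_def[abs_def] by (intro polyfun_diff polyfun.mult polyfun_det3) auto

lemma coplanarity_poly_nonzero: "\<exists>\<beta>\<in>arr_space 6 3. coplanarity_poly \<beta> \<noteq> 0"
proof
  let ?\<beta> = "\<lambda>i j. if i < 6 \<and> j < 3 \<and> j = i mod 3 then 1 else 0 :: complex"
  show "?\<beta> \<in> arr_space 6 3" "coplanarity_poly ?\<beta> \<noteq> 0"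
    by (auto simp: arr_space_def coplanarity_poly_def det3_def)
qed

lemma not_very_generic_if_lattice_forces_equation:
  assumes "polyfun n k f" and "\<exists>\<beta>\<in>arr_space n k. f \<beta> \<noteq> 0"
    and forces: "\<And>\<beta>. lattice_data n k \<beta> S L \<Longrightarrow> f \<beta> = 0"
    and "lattice_data n k \<alpha> S L"
  shows "\<not> very_generic n k \<alpha>"
proof
  assume "very_generic n k \<alpha>"
  then obtain Z where Z: "zariski_open n k Z" "zariski_dense n k Z"
      "\<forall>\<beta>\<in>Z. lattice_data n k \<beta> = lattice_data n k \<alpha>"
    unfolding very_generic_def by blast
  define C where "C = {\<beta> \<in> arr_space n k. \<forall>g\<in>{f}. g \<beta> = 0}"
  have "zariski_closed n k C"
    unfolding zariski_closed_def C_def using assms(1) by blast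
  moreover have "Z \<subseteq> C"
    using Z(1,3) forces assms(4) unfolding C_def zariski_open_def by auto
  ultimately have "C = arr_space n k"
    using Z(2) unfolding zariski_dense_def by blast
  then show False
    using assms(2) unfolding C_def by blast
qed

lemma lin_form_vandermonde_arr:
  "i < n \<Longrightarrow> lin_form 3 (vandermonde_arr n 3 s i) w = w 0 + s i * w 1 + s i ^ 2 * w 2"
  by (simp add: lin_form_3 vandermonde_arr_def)

lemma symmetric_nodes_lattice_inclusion:
  fixes a b :: complex
  assumes "a\<^sup>2 \<noteq> b\<^sup>2"
  shows "lattice_data 6 3 (vandermonde_arr 6 3 ((!) [1, -1, a, -a, b, -b]))
           {{0,1,2,3},{0,1,4,5}} {2,3,4,5}"
proof -
  let ?\<alpha> = "vandermonde_arr 6 3 ((!) [1, -1, a, -a, b, -b])"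
  have "t \<in> D_L 3 ?\<alpha> {2,3,4,5}"
    if t: "t \<in> D_L 3 ?\<alpha> {0,1,2,3}" "t \<in> D_L 3 ?\<alpha> {0,1,4,5}" for t
  proof -
    obtain u v where "\<forall>p\<in>{0,1,2,3}. lin_form 3 (?\<alpha> p) u = t p"
        and "\<forall>p\<in>{0,1,4,5}. lin_form 3 (?\<alpha> p) v = t p"
      using t unfolding mem_D_L_iff by blast
    then have eqs: "u 0 + u 1 + u 2 = v 0 + v 1 + v 2" "u 0 - u 1 + u 2 = v 0 - v 1 + v 2"
        "u 0 + a * u 1 + a\<^sup>2 * u 2 = t 2" "u 0 - a * u 1 + a\<^sup>2 * u 2 = t 3"
        "v 0 + b * v 1 + b\<^sup>2 * v 2 = t 4" "v 0 - b * v 1 + b\<^sup>2 * v 2 = t 5"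
      by (auto simp: lin_form_vandermonde_arr)
    have "2 * u 1 = 2 * v 1"
      using eqs(1,2) by algebra
    then have u1: "u 1 = v 1"
      by simp
    then have u0: "u 0 - v 0 = v 2 - u 2"
      using eqs(1) by (simp add: algebra_simps)
    text \<open>Moving \<open>v\<close> along the line \<open>H\<^sub>4 \<inter> H\<^sub>5\<close>, spanned by \<open>(-b\<^sup>2, 0, 1)\<close>, reaches \<open>H\<^sub>2\<close> and \<open>H\<^sub>3\<close>.\<close>
    define c where "c = (u 2 - v 2) * (a\<^sup>2 - 1) / (a\<^sup>2 - b\<^sup>2)"
    have c: "c * (a\<^sup>2 - b\<^sup>2) = (u 2 - v 2) * (a\<^sup>2 - 1)"
      unfolding c_def using assms by simp
    define w :: "nat \<Rightarrow> complex" where "w = v(0 := v 0 - c * b\<^sup>2, 2 := v 2 + c)"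
    have "w 0 + a * w 1 + a\<^sup>2 * w 2 = t 2" "w 0 - a * w 1 + a\<^sup>2 * w 2 = t 3"
      using c u0 u1 eqs(3,4) unfolding w_def by (simp_all, algebra+)
    moreover have "w 0 + b * w 1 + b\<^sup>2 * w 2 = t 4" "w 0 - b * w 1 + b\<^sup>2 * w 2 = t 5"
      using eqs(5,6) unfolding w_def by (simp_all add: algebra_simps)
    ultimately have "\<forall>p\<in>{2,3,4,5}. lin_form 3 (?\<alpha> p) w = t p"
      by (simp add: lin_form_vandermonde_arr)
    then show ?thesis
      unfolding mem_D_L_iff by blast
  qed
  then show ?thesis
    unfolding lattice_data_def Ls_def by auto
qed

theorem mainTheorem4:
  fixes a b :: complex
  assumes "distinct [1, -1, a, -a, b, -b]"
  defines "\<alpha> \<equiv> (\<lambda>i j. if i < 6 \<and> j < 3 then ([1, -1, a, -a, b, -b] ! i) ^ j else 0)"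
  shows "central_generic 6 3 \<alpha> \<and> \<not> very_generic 6 3 \<alpha>"
proof
  have \<alpha>: "\<alpha> = vandermonde_arr 6 3 ((!) [1, -1, a, -a, b, -b])"
    unfolding \<alpha>_def vandermonde_arr_def by simp
  have "inj_on ((!) [1, -1, a, -a, b, -b]) {..<6}"
    using assms(1) by (simp add: inj_on_def nth_eq_iff_index_eq)
  then show "central_generic 6 3 \<alpha>"
    unfolding \<alpha> by (simp add: central_generic_vandermonde_arr)
  have "a\<^sup>2 \<noteq> b\<^sup>2"
    using assms(1) by (auto simp: power2_eq_iff)
  then show "\<not> very_generic 6 3 \<alpha>"
    unfolding \<alpha> using not_very_generic_if_lattice_forces_equation[OF polyfun_coplanarity_poly
      coplanarity_poly_nonzero coplanarity_poly_eq_0_if_lattice_inclusion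
      symmetric_nodes_lattice_inclusion] by blast
qed

end
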